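(* Let $\Omega\subseteq\mathbb R^N$ be an open set with bounded inner radius $R:=\sup_{x\in\Omega}\operatorname{dist}(x,\partial\Omega)<\infty$, let $\alpha,\beta\ge0$, $r_0>0$ and $\lambda>1$. There exist $c,C>0$ depending only on $N,R,\alpha,\beta,r_0,\lambda$ such that for every $u:\Omega\to\mathbb R$, $$c\|u\|^{(\beta)}_{\mathcal L^\alpha(\Omega)}\le\sup_{\substack{B_{\lambda r}(x)\subseteq\Omega\\ r\in(0,r_0)}}\Big(\ell^\beta(r)\|u\|_{L^\infty(B_r(x))}+\ell^{\alpha+\beta}(r)[u]_{\mathcal L^\alpha(B_r(x))}\Big)\le C\|u\|^{(\beta)}_{\mathcal L^\alpha(\Omega)},$$ meaning that either all three quantities are finite and the inequalities hold, or all three are infinite.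
   Context: $\ell(\rho):=|\ln(\min\{\rho,1/10\})|^{-1}$ for $\rho>0$, $\ell(0):=0$. For an open set $U$, $d(x):=\operatorname{dist}(x,\partial U)$, $d(x,y):=\min(d(x),d(y))$. For $\alpha,\beta\ge0$ and $u:U\to\mathbb R$: $[u]_{\mathcal L^\alpha(U)}:=\sup_{x\ne y\in U}\frac{|u(x)-u(y)|}{\ell^\alpha(|x-y|)}$, $[u]^{(\beta)}_{\mathcal L^\alpha(U)}:=\sup_{x\neq y\in U}\ell^{\alpha+\beta}(d(x,y))\frac{|u(x)-u(y)|}{\ell^\alpha(|x-y|)}$, $\|u\|^{(\beta)}_{\mathcal L^\alpha(U)}:=\sup_{x\in U}\ell^\beta(d(x))|u(x)|+[u]^{(\beta)}_{\mathcal L^\alpha(U)}$. *)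

theory Defs
  imports "HOL-Analysis.Analysis"
begin

definition ell :: "real \<Rightarrow> real" where
  "ell \<rho> = (if \<rho> > 0 then 1 / \<bar>ln (min \<rho> (1/10))\<bar> else 0)"

definition bdist :: "'a::euclidean_space set \<Rightarrow> 'a \<Rightarrow> real" where
  "bdist U x = infdist x (frontier U)"

definition Lsemi :: "real \<Rightarrow> 'a::euclidean_space set \<Rightarrow> ('a \<Rightarrow> real) \<Rightarrow> ereal" where
  "Lsemi \<alpha> U u = (SUP p \<in> {(x, y). x \<in> U \<and> y \<in> U \<and> x \<noteq> y}.
      ereal (\<bar>u (fst p) - u (snd p)\<bar> / (ell (dist (fst p) (snd p)) powr \<alpha>)))"

definition Lsemi_w :: "real \<Rightarrow> real \<Rightarrow> 'a::euclidean_space set \<Rightarrow> ('a \<Rightarrow> real) \<Rightarrow> ereal" where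
  "Lsemi_w \<alpha> \<beta> U u = (SUP p \<in> {(x, y). x \<in> U \<and> y \<in> U \<and> x \<noteq> y}.
      ereal (ell (min (bdist U (fst p)) (bdist U (snd p))) powr (\<alpha> + \<beta>)
             * \<bar>u (fst p) - u (snd p)\<bar> / (ell (dist (fst p) (snd p)) powr \<alpha>)))"

definition Lnorm_w :: "real \<Rightarrow> real \<Rightarrow> 'a::euclidean_space set \<Rightarrow> ('a \<Rightarrow> real) \<Rightarrow> ereal" where
  "Lnorm_w \<alpha> \<beta> U u = (SUP x \<in> U. ereal (ell (bdist U x) powr \<beta> * \<bar>u x\<bar>)) + Lsemi_w \<alpha> \<beta> U u"

definition supnorm :: "'a set \<Rightarrow> ('a \<Rightarrow> real) \<Rightarrow> ereal" where
  "supnorm U u = (SUP x \<in> U. ereal \<bar>u x\<bar>)"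

definition local_quantity ::
  "real \<Rightarrow> real \<Rightarrow> real \<Rightarrow> real \<Rightarrow> 'a::euclidean_space set \<Rightarrow> ('a \<Rightarrow> real) \<Rightarrow> ereal" where
  "local_quantity \<alpha> \<beta> r0 lam U u =
     (SUP p \<in> {(x, r). 0 < r \<and> r < r0 \<and> ball x (lam * r) \<subseteq> U}.
        ereal (ell (snd p) powr \<beta>) * supnorm (ball (fst p) (snd p)) u
      + ereal (ell (snd p) powr (\<alpha> + \<beta>)) * Lsemi \<alpha> (ball (fst p) (snd p)) u)"

end

theory Submission
  imports Defs
begin

text \<open>\<open>\<ell>\<close> varies slowly (shrinking its argument by a factor \<open>q\<close> costs at most the factor
  \<open>1 + ln q / ln 10\<close>) and is bounded by \<open>1 / ln 10\<close>. Hence the weight \<open>\<ell>(r)\<close> of an admissible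
  ball \<open>B\<^sub>r(x)\<close>, \<open>B\<^sub>\<lambda>\<^sub>r(x) \<subseteq> \<Omega>\<close>, and the weights \<open>\<ell>(d(z))\<close> of suitable points are comparable
  up to constants depending only on \<open>\<lambda>\<close> and \<open>r\<^sub>0\<close>. For the upper bound use \<open>d(z) \<ge> (\<lambda> - 1) r\<close>
  on \<open>B\<^sub>r(x)\<close>. For the lower bound, \<open>x\<close> is the centre of the admissible ball of radius
  \<open>min (d(x)/\<lambda>) (r\<^sub>0/2)\<close>; a pair \<open>x, y\<close> with \<open>d(x) \<le> d(y)\<close> either lies in that ball, or \<open>|x - y|\<close>
  exceeds its radius and the weighted difference quotient is bounded by the two weighted values.\<close>

lemma neg_ln_min_ge_ln_10:
  fixes \<rho> :: real
  assumes "0 < \<rho>"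
  shows "ln 10 \<le> - ln (min \<rho> (1/10))"
proof -
  have "ln (min \<rho> (1/10)) \<le> ln (1/10)"
    using assms by (subst ln_le_cancel_iff) auto
  then show ?thesis by (simp add: ln_div)
qed

lemma ell_eq_inverse_neg_ln:
  assumes "0 < \<rho>"
  shows "ell \<rho> = 1 / - ln (min \<rho> (1/10))"
  using neg_ln_min_ge_ln_10[OF assms] assms ln_gt_zero[of "10::real"]
  unfolding ell_def by auto

lemma ell_nonneg: "0 \<le> ell \<rho>"
  unfolding ell_def by auto

lemma ell_pos: "0 < \<rho> \<Longrightarrow> 0 < ell \<rho>"
  unfolding ell_def by (auto simp: min_def)

lemma ell_le_inverse_ln_10: "ell \<rho> \<le> 1 / ln 10"
proof (cases "0 < \<rho>")
  case True
  show ?thesis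
    unfolding ell_eq_inverse_neg_ln[OF True]
    by (rule frac_le) (use neg_ln_min_ge_ln_10[OF True] in auto)
qed (simp add: ell_def)

lemma ell_mono:
  assumes "0 \<le> a" "a \<le> b"
  shows "ell a \<le> ell b"
proof (cases "a = 0")
  case False
  then have a: "0 < a" and b: "0 < b" using assms by auto
  have "ln (min a (1/10)) \<le> ln (min b (1/10))"
    using a assms by (subst ln_le_cancel_iff) auto
  moreover have "0 < - ln (min b (1/10))"
    using neg_ln_min_ge_ln_10[OF b] ln_gt_zero[of "10::real"] by linarith
  ultimately show ?thesis
    unfolding ell_eq_inverse_neg_ln[OF a] ell_eq_inverse_neg_ln[OF b]
    by (intro frac_le) auto
qed (simp add: ell_nonneg ell_def[of 0])

text \<open>\<open>\<rho> \<mapsto> -ln (min \<rho> (1/10))\<close> is \<open>1\<close>-Lipschitz in \<open>ln \<rho>\<close> and at least \<open>ln 10\<close>.\<close>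
lemma ell_le_mult_ell_of_le:
  assumes "0 < a" "a \<le> b"
  shows "ell b \<le> (1 + ln (b / a) / ln 10) * ell a"
proof -
  define La where "La = - ln (min a (1/10))"
  define Lb where "Lb = - ln (min b (1/10))"
  define \<delta> where "\<delta> = ln (b / a)"
  have b: "0 < b" using assms by simp
  have Lb10: "ln 10 \<le> Lb" unfolding Lb_def using neg_ln_min_ge_ln_10[OF b] .
  have \<delta>0: "0 \<le> \<delta>" unfolding \<delta>_def using assms by simp
  have "La \<le> Lb + \<delta>"
  proof (cases "b \<le> 1/10")
    case False
    then have "- ln 10 \<le> ln b" using ln_le_cancel_iff[of "1/10" b] by (simp add: ln_div)
    then show ?thesis using assms by (auto simp: La_def Lb_def \<delta>_def min_def ln_div)
  qed (use assms in \<open>auto simp: La_def Lb_def \<delta>_def min_def ln_div\<close>)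
  also have "\<dots> \<le> Lb * (1 + \<delta> / ln 10)"
    using Lb10 \<delta>0 mult_right_mono[OF Lb10 \<delta>0] by (simp add: field_simps)
  finally have "La \<le> Lb * (1 + \<delta> / ln 10)" .
  moreover have "ln 10 \<le> La" unfolding La_def using neg_ln_min_ge_ln_10[OF assms(1)] .
  moreover have "0 < ln (10::real)" by simp
  ultimately have "0 < La" "0 < Lb" "La * ln 10 \<le> Lb * (ln 10 + \<delta>)"
    using Lb10 by (linarith, linarith, simp add: field_simps)
  then have "1 / Lb \<le> (1 + \<delta> / ln 10) * (1 / La)"
    by (simp add: field_simps)
  then show ?thesis
    using assms b by (simp add: ell_eq_inverse_neg_ln La_def Lb_def \<delta>_def)
qed

definition ell_dilation :: "real \<Rightarrow> real" where
  "ell_dilation c = 1 + ln (max 1 (1 / c)) / ln 10"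

lemma ell_dilation_ge_1: "0 < c \<Longrightarrow> 1 \<le> ell_dilation c"
  unfolding ell_dilation_def by simp

lemma ell_le_ell_dilation_mult:
  assumes "0 < c" "0 < s" "c * s \<le> t"
  shows "ell s \<le> ell_dilation c * ell t"
proof -
  define a where "a = min 1 c * s"
  have "s \<le> t" if "1 \<le> c"
  proof -
    have "1 * s \<le> c * s" using assms that by (intro mult_right_mono) auto
    then show ?thesis using assms by linarith
  qed
  then have a: "0 < a" "a \<le> s" "a \<le> t"
    using assms by (auto simp: a_def min_def)
  have "s / a = max 1 (1 / c)"
    using assms by (auto simp: a_def min_def max_def field_simps)
  then have "ell s \<le> ell_dilation c * ell a"
    using ell_le_mult_ell_of_le[OF a(1,2)] by (simp add: ell_dilation_def)
  also have "\<dots> \<le> ell_dilation c * ell t"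
    using a ell_dilation_ge_1[OF assms(1)] by (intro mult_left_mono ell_mono) auto
  finally show ?thesis .
qed

lemma powr_le_mult_powr:
  fixes a b K p :: real
  assumes "0 \<le> a" "a \<le> K * b" "0 \<le> K" "0 \<le> b" "0 \<le> p"
  shows "a powr p \<le> K powr p * b powr p"
proof -
  have "a powr p \<le> (K * b) powr p" using assms by (intro powr_mono2) auto
  also have "\<dots> = K powr p * b powr p"
    using assms by (simp add: powr_mult)
  finally show ?thesis .
qed

lemma ball_subset_iff_le_bdist:
  fixes \<Omega> :: "'a::euclidean_space set"
  assumes "open \<Omega>" "\<Omega> \<noteq> UNIV" "x \<in> \<Omega>"
  shows "ball x \<rho> \<subseteq> \<Omega> \<longleftrightarrow> \<rho> \<le> bdist \<Omega> x"
proof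
  assume sub: "ball x \<rho> \<subseteq> \<Omega>"
  have fr: "frontier \<Omega> \<noteq> {}" using assms frontier_not_empty by blast
  have "\<rho> \<le> dist x y" if "y \<in> frontier \<Omega>" for y
  proof -
    have "y \<notin> \<Omega>" using that assms(1) by (auto simp: frontier_def interior_open)
    then show ?thesis using sub by (meson mem_ball not_le subsetD)
  qed
  then show "\<rho> \<le> bdist \<Omega> x"
    unfolding bdist_def infdist_notempty[OF fr] by (intro cINF_greatest fr)
next
  assume le: "\<rho> \<le> bdist \<Omega> x"
  show "ball x \<rho> \<subseteq> \<Omega>"
  proof
    fix y assume y: "y \<in> ball x \<rho>"
    show "y \<in> \<Omega>"
    proof (rule ccontr)
      assume "y \<notin> \<Omega>"
      then obtain p where p: "p \<in> closed_segment x y" "p \<in> frontier \<Omega>"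
        using connected_Int_frontier[of "closed_segment x y" \<Omega>] assms(3) by auto
      have "bdist \<Omega> x \<le> dist x p" unfolding bdist_def using p(2) by (rule infdist_le)
      also have "\<dots> \<le> dist x y" using p(1) by (simp add: dist_commute dist_in_closed_segment)
      finally show False using y le by simp
    qed
  qed
qed

lemma bdist_pos:
  fixes \<Omega> :: "'a::euclidean_space set"
  assumes "open \<Omega>" "\<Omega> \<noteq> UNIV" "x \<in> \<Omega>"
  shows "0 < bdist \<Omega> x"
proof -
  obtain e where "0 < e" "ball x e \<subseteq> \<Omega>" using assms openE by blast
  then show ?thesis using ball_subset_iff_le_bdist[OF assms] by force
qed

lemma radius_minus_dist_le_bdist:
  fixes \<Omega> :: "'a::euclidean_space set"
  assumes "open \<Omega>" "\<Omega> \<noteq> UNIV" "ball x \<rho> \<subseteq> \<Omega>" "z \<in> ball x \<rho>"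
  shows "\<rho> - dist x z \<le> bdist \<Omega> z"
proof -
  have "dist x z < \<rho>" using assms(4) by simp
  then have "0 < \<rho>" using zero_le_dist[of x z] by linarith
  then have "x \<in> \<Omega>" using assms(3) by auto
  then have "\<rho> \<le> bdist \<Omega> x" using ball_subset_iff_le_bdist assms by blast
  then show ?thesis using infdist_triangle[of x "frontier \<Omega>" z] by (simp add: bdist_def)
qed

lemma open_other_point:
  fixes S :: "'a::perfect_space set"
  assumes "open S" "x \<in> S"
  obtains y where "y \<in> S" "y \<noteq> x"
proof -
  have "S \<noteq> {x}" using assms(1) not_open_singleton by metis
  then show ?thesis using that assms(2) by blast
qed

lemma ereal_le_mult_if_real_bounds:
  fixes P Q :: ereal
  assumes "0 < K" "\<And>M. Q \<le> ereal M \<Longrightarrow> P \<le> ereal (K * M)"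
  shows "P \<le> ereal K * Q"
proof (cases Q)
  case (real M)
  then have "P \<le> ereal (K * M)" by (intro assms(2)) simp
  then show ?thesis using real by simp
next
  case PInf
  then show ?thesis using assms(1) by simp
next
  case MInf
  have "P \<le> ereal B" for B
  proof -
    have "Q \<le> ereal (B / K)" using MInf by simp
    then have "P \<le> ereal (K * (B / K))" by (rule assms(2))
    then show ?thesis using assms(1) by simp
  qed
  then have "P = -\<infinity>" by (rule ereal_bot)
  then show ?thesis by simp
qed

lemma ereal_inverse_mult_le:
  fixes P Q :: ereal
  assumes "0 < K" "P \<le> ereal K * Q"
  shows "ereal (1 / K) * P \<le> Q"
proof -
  have "ereal (1 / K) * P \<le> ereal (1 / K) * (ereal K * Q)"
    using assms by (intro ereal_mult_left_mono) auto
  also have "\<dots> = (ereal (1 / K) * ereal K) * Q" by (rule mult.assoc[symmetric])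
  also have "\<dots> = Q" using assms(1) by simp
  finally show ?thesis .
qed

lemma ereal_mult_SUP_le:
  fixes a b :: real and f :: "'i \<Rightarrow> real"
  assumes "0 < a" "\<And>i. i \<in> I \<Longrightarrow> a * f i \<le> b"
  shows "ereal a * (SUP i\<in>I. ereal (f i)) \<le> ereal b"
proof -
  have "(SUP i\<in>I. ereal (f i)) \<le> ereal (b / a)"
    using assms by (intro SUP_least) (simp add: pos_le_divide_eq mult.commute)
  then have "ereal a * (SUP i\<in>I. ereal (f i)) \<le> ereal a * ereal (b / a)"
    using assms by (intro ereal_mult_left_mono) auto
  also have "\<dots> = ereal b" using assms by simp
  finally show ?thesis .
qed

lemma supnorm_ge: "z \<in> U \<Longrightarrow> ereal \<bar>u z\<bar> \<le> supnorm U u"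
  unfolding supnorm_def by (rule SUP_upper2) auto

lemma Lsemi_ge:
  "y \<in> U \<Longrightarrow> z \<in> U \<Longrightarrow> y \<noteq> z \<Longrightarrow>
    ereal (\<bar>u y - u z\<bar> / ell (dist y z) powr \<alpha>) \<le> Lsemi \<alpha> U u"
  unfolding Lsemi_def by (rule SUP_upper2[where i="(y, z)"]) auto

lemma Lsemi_w_ge:
  "y \<in> U \<Longrightarrow> z \<in> U \<Longrightarrow> y \<noteq> z \<Longrightarrow>
    ereal (ell (min (bdist U y) (bdist U z)) powr (\<alpha> + \<beta>) * \<bar>u y - u z\<bar> / ell (dist y z) powr \<alpha>)
      \<le> Lsemi_w \<alpha> \<beta> U u"
  unfolding Lsemi_w_def by (rule SUP_upper2[where i="(y, z)"]) auto

lemma ball_bounds_of_local_quantity_le: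
  fixes x :: "'a::euclidean_space"
  assumes LQ: "local_quantity \<alpha> \<beta> r0 lam \<Omega> u \<le> ereal M"
    and r: "0 < r" "r < r0" "ball x (lam * r) \<subseteq> \<Omega>"
  shows "z \<in> ball x r \<Longrightarrow> ell r powr \<beta> * \<bar>u z\<bar> \<le> M"
    and "y \<in> ball x r \<Longrightarrow> z \<in> ball x r \<Longrightarrow> y \<noteq> z \<Longrightarrow>
      ell r powr (\<alpha> + \<beta>) * \<bar>u y - u z\<bar> / ell (dist y z) powr \<alpha> \<le> M"
proof -
  define S where "S = ereal (ell r powr \<beta>) * supnorm (ball x r) u"
  define L where "L = ereal (ell r powr (\<alpha> + \<beta>)) * Lsemi \<alpha> (ball x r) u"
  have "S + L \<le> local_quantity \<alpha> \<beta> r0 lam \<Omega> u"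
    unfolding local_quantity_def S_def L_def using r by (intro SUP_upper2[where i="(x, r)"]) auto
  then have SL: "S + L \<le> ereal M" using LQ by (rule order_trans)
  have x: "x \<in> ball x r" using r by simp
  \<comment> \<open>a second point is needed: the supremum over no pairs would be \<open>-\<infinity>\<close>\<close>
  obtain x' where x': "x' \<in> ball x r" "x' \<noteq> x" using open_other_point[OF open_ball x] .
  have "0 \<le> supnorm (ball x r) u"
    using supnorm_ge[OF x, of u] by (rule order_trans[rotated]) simp
  then have S0: "0 \<le> S" unfolding S_def by (intro ereal_0_le_mult) auto
  have "0 \<le> Lsemi \<alpha> (ball x r) u"
    using Lsemi_ge[OF x'(1) x x'(2), of u \<alpha>] by (rule order_trans[rotated]) simp
  then have L0: "0 \<le> L" unfolding L_def by (intro ereal_0_le_mult) auto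
  show "ell r powr \<beta> * \<bar>u z\<bar> \<le> M" if "z \<in> ball x r"
  proof -
    have "ereal (ell r powr \<beta>) * ereal \<bar>u z\<bar> \<le> S"
      unfolding S_def using that by (intro ereal_mult_left_mono supnorm_ge) auto
    also have "\<dots> \<le> ereal M" using SL L0 ereal_le_add_self order_trans by blast
    finally show ?thesis by simp
  qed
  show "ell r powr (\<alpha> + \<beta>) * \<bar>u y - u z\<bar> / ell (dist y z) powr \<alpha> \<le> M"
    if "y \<in> ball x r" "z \<in> ball x r" "y \<noteq> z"
  proof -
    have "ereal (ell r powr (\<alpha> + \<beta>)) * ereal (\<bar>u y - u z\<bar> / ell (dist y z) powr \<alpha>) \<le> L"
      unfolding L_def using that by (intro ereal_mult_left_mono Lsemi_ge) auto
    also have "\<dots> \<le> ereal M" using SL S0 ereal_le_add_self2 order_trans by blast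
    finally show ?thesis by simp
  qed
qed

lemma weighted_bounds_of_Lnorm_w_le:
  fixes \<Omega> :: "'a::euclidean_space set"
  assumes LN: "Lnorm_w \<alpha> \<beta> \<Omega> u \<le> ereal M" and "open \<Omega>"
  shows "z \<in> \<Omega> \<Longrightarrow> ell (bdist \<Omega> z) powr \<beta> * \<bar>u z\<bar> \<le> M"
    and "y \<in> \<Omega> \<Longrightarrow> z \<in> \<Omega> \<Longrightarrow> y \<noteq> z \<Longrightarrow>
      ell (min (bdist \<Omega> y) (bdist \<Omega> z)) powr (\<alpha> + \<beta>) * \<bar>u y - u z\<bar> / ell (dist y z) powr \<alpha> \<le> M"
proof -
  define A where "A = (SUP x \<in> \<Omega>. ereal (ell (bdist \<Omega> x) powr \<beta> * \<bar>u x\<bar>))"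
  have AB: "A + Lsemi_w \<alpha> \<beta> \<Omega> u \<le> ereal M" using LN by (simp add: Lnorm_w_def A_def)
  have A_ge: "ereal (ell (bdist \<Omega> z) powr \<beta> * \<bar>u z\<bar>) \<le> A" if "z \<in> \<Omega>" for z
    unfolding A_def using that by (rule SUP_upper)
  show "ell (bdist \<Omega> z) powr \<beta> * \<bar>u z\<bar> \<le> M" if z: "z \<in> \<Omega>"
  proof -
    obtain z' where z': "z' \<in> \<Omega>" "z' \<noteq> z" using open_other_point[OF \<open>open \<Omega>\<close> z] .
    have "0 \<le> Lsemi_w \<alpha> \<beta> \<Omega> u"
      using Lsemi_w_ge[OF z'(1) z z'(2), of \<alpha> \<beta> u] by (rule order_trans[rotated]) simp
    then have "A \<le> ereal M" using AB ereal_le_add_self order_trans by blast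
    with A_ge[OF z] have "ereal (ell (bdist \<Omega> z) powr \<beta> * \<bar>u z\<bar>) \<le> ereal M"
      by (rule order_trans)
    then show ?thesis by simp
  qed
  show "ell (min (bdist \<Omega> y) (bdist \<Omega> z)) powr (\<alpha> + \<beta>) * \<bar>u y - u z\<bar> / ell (dist y z) powr \<alpha> \<le> M"
    if yz: "y \<in> \<Omega>" "z \<in> \<Omega>" "y \<noteq> z"
  proof -
    have "0 \<le> A" using A_ge[OF yz(1)] by (rule order_trans[rotated]) simp
    then have "Lsemi_w \<alpha> \<beta> \<Omega> u \<le> ereal M" using AB ereal_le_add_self2 order_trans by blast
    with Lsemi_w_ge[OF yz, of \<alpha> \<beta> u] show ?thesis by (metis ereal_less_eq(3) order_trans)
  qed
qed

text \<open>The two cases of the radius \<open>min (d(x)/\<lambda>) (r\<^sub>0/2)\<close> chosen in the next lemma.\<close>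
definition admissible_ratio :: "real \<Rightarrow> real \<Rightarrow> real" where
  "admissible_ratio lam r0 = max (ell_dilation (1 / lam)) (1 / (ln 10 * ell (r0 / 2)))"

lemma admissible_ratio_ge_1: "0 < lam \<Longrightarrow> 1 \<le> admissible_ratio lam r0"
  using ell_dilation_ge_1[of "1 / lam"] by (simp add: admissible_ratio_def)

lemma admissible_radius_exists:
  fixes \<Omega> :: "'a::euclidean_space set"
  assumes "0 < r0" "0 < lam" "open \<Omega>" "\<Omega> \<noteq> UNIV" "x \<in> \<Omega>"
  obtains r where "0 < r" "r < r0" "ball x (lam * r) \<subseteq> \<Omega>"
    "ell (bdist \<Omega> x) \<le> admissible_ratio lam r0 * ell r"
proof -
  define d where "d = bdist \<Omega> x"
  define r where "r = min (d / lam) (r0 / 2)"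
  have d: "0 < d" using bdist_pos[OF assms(3-5)] by (simp add: d_def)
  have r: "0 < r" "r < r0" using d assms(1,2) by (auto simp: r_def)
  have "lam * r \<le> d" using assms(2) by (simp add: r_def min_def field_simps)
  then have ball: "ball x (lam * r) \<subseteq> \<Omega>"
    using ball_subset_iff_le_bdist[OF assms(3-5)] by (simp add: d_def)
  have "ell d \<le> admissible_ratio lam r0 * ell r"
  proof (cases "d / lam \<le> r0 / 2")
    case True
    then have "ell d \<le> ell_dilation (1 / lam) * ell r"
      using d assms(2) by (intro ell_le_ell_dilation_mult) (auto simp: r_def)
    also have "\<dots> \<le> admissible_ratio lam r0 * ell r"
      by (intro mult_right_mono) (auto simp: admissible_ratio_def ell_nonneg)
    finally show ?thesis .
  next
    case False
    then have r2: "r = r0 / 2" by (simp add: r_def)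
    have "0 < ell (r0 / 2)" using assms(1) by (intro ell_pos) auto
    then have "ell d \<le> 1 / (ln 10 * ell (r0 / 2)) * ell r"
      using ell_le_inverse_ln_10[of d] by (simp add: r2)
    also have "\<dots> \<le> admissible_ratio lam r0 * ell r"
      by (intro mult_right_mono) (auto simp: admissible_ratio_def ell_nonneg)
    finally show ?thesis .
  qed
  then show ?thesis using that r ball by (simp add: d_def)
qed

lemma weighted_value_le_of_local_quantity_le:
  fixes \<Omega> :: "'a::euclidean_space set"
  assumes "0 \<le> \<beta>" "0 < r0" "0 < lam" "open \<Omega>" "\<Omega> \<noteq> UNIV" "x \<in> \<Omega>"
    and LQ: "local_quantity \<alpha> \<beta> r0 lam \<Omega> u \<le> ereal M"
  shows "ell (bdist \<Omega> x) powr \<beta> * \<bar>u x\<bar> \<le> admissible_ratio lam r0 powr \<beta> * M"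
proof -
  define K where "K = admissible_ratio lam r0"
  obtain r where r: "0 < r" "r < r0" "ball x (lam * r) \<subseteq> \<Omega>"
    and ell_x: "ell (bdist \<Omega> x) \<le> K * ell r"
    using admissible_radius_exists[OF assms(2-6)] unfolding K_def .
  have "0 \<le> K" using admissible_ratio_ge_1[of lam r0] assms(3) unfolding K_def by linarith
  then have "ell (bdist \<Omega> x) powr \<beta> \<le> K powr \<beta> * ell r powr \<beta>"
    using ell_x assms(1) by (intro powr_le_mult_powr) (auto simp: ell_nonneg)
  then have "ell (bdist \<Omega> x) powr \<beta> * \<bar>u x\<bar> \<le> K powr \<beta> * (ell r powr \<beta> * \<bar>u x\<bar>)"
    unfolding mult.assoc[symmetric] by (rule mult_right_mono) simp
  also have "\<dots> \<le> K powr \<beta> * M"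
    using ball_bounds_of_local_quantity_le(1)[OF LQ r, of x] r(1) by (intro mult_left_mono) auto
  finally show ?thesis by (simp add: K_def)
qed

lemma weighted_diff_le_of_local_quantity_le:
  fixes \<Omega> :: "'a::euclidean_space set"
  assumes "0 \<le> \<alpha>" "0 \<le> \<beta>" "0 < r0" "0 < lam" "open \<Omega>" "\<Omega> \<noteq> UNIV"
    and "x \<in> \<Omega>" "y \<in> \<Omega>" "x \<noteq> y"
    and LQ: "local_quantity \<alpha> \<beta> r0 lam \<Omega> u \<le> ereal M"
  shows "ell (min (bdist \<Omega> x) (bdist \<Omega> y)) powr (\<alpha> + \<beta>) * \<bar>u x - u y\<bar> / ell (dist x y) powr \<alpha>
    \<le> 2 * admissible_ratio lam r0 powr (\<alpha> + \<beta>) * M"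
proof -
  have bound_if_le: "ell (min (bdist \<Omega> x) (bdist \<Omega> y)) powr (\<alpha> + \<beta>) * \<bar>u x - u y\<bar>
      / ell (dist x y) powr \<alpha> \<le> 2 * admissible_ratio lam r0 powr (\<alpha> + \<beta>) * M"
    if xy: "x \<in> \<Omega>" "y \<in> \<Omega>" "x \<noteq> y" and le: "bdist \<Omega> x \<le> bdist \<Omega> y" for x y
  proof -
    define K where "K = admissible_ratio lam r0"
    define d where "d = bdist \<Omega> x"
    obtain r where r: "0 < r" "r < r0" "ball x (lam * r) \<subseteq> \<Omega>" and ell_d: "ell d \<le> K * ell r"
      using admissible_radius_exists[OF assms(3-6) xy(1)] unfolding K_def d_def .
    have K: "0 \<le> K" using admissible_ratio_ge_1[of lam r0] assms(4) unfolding K_def by linarith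
    have ell_d_powr: "ell d powr \<gamma> \<le> K powr \<gamma> * ell r powr \<gamma>" if "0 \<le> \<gamma>" for \<gamma>
      using ell_d K that by (intro powr_le_mult_powr) (auto simp: ell_nonneg)
    have "0 \<le> ell r powr \<beta> * \<bar>u x\<bar>" by simp
    also have "\<dots> \<le> M" using ball_bounds_of_local_quantity_le(1)[OF LQ r, of x] r(1) by simp
    finally have M0: "0 \<le> M" .
    have min: "min (bdist \<Omega> x) (bdist \<Omega> y) = d" using le by (simp add: d_def)
    consider (near) "dist x y < r" | (far) "r \<le> dist x y" by linarith
    then show ?thesis
    proof cases
      case near
      define q where "q = \<bar>u x - u y\<bar> / ell (dist x y) powr \<alpha>"
      have "ell d powr (\<alpha> + \<beta>) * q \<le> K powr (\<alpha> + \<beta>) * (ell r powr (\<alpha> + \<beta>) * q)"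
        unfolding mult.assoc[symmetric] using ell_d_powr assms(1,2) by (intro mult_right_mono) (auto simp: q_def)
      also have "\<dots> \<le> K powr (\<alpha> + \<beta>) * M"
        using ball_bounds_of_local_quantity_le(2)[OF LQ r, of x y] near r(1) xy(3)
        by (intro mult_left_mono) (auto simp: q_def)
      also have "\<dots> \<le> 2 * K powr (\<alpha> + \<beta>) * M" using M0 by simp
      finally show ?thesis by (simp add: min q_def K_def)
    next
      case far
      have "ell d powr \<alpha> \<le> K powr \<alpha> * ell r powr \<alpha>" using ell_d_powr assms(1) .
      also have "\<dots> \<le> K powr \<alpha> * ell (dist x y) powr \<alpha>"
        using far r(1) assms(1) by (intro mult_left_mono powr_mono2 ell_mono) (auto simp: ell_nonneg)
      finally have "ell d powr \<alpha> / ell (dist x y) powr \<alpha> \<le> K powr \<alpha>"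
        using ell_pos[of "dist x y"] xy(3) by (simp add: divide_le_eq)
      moreover have "ell d powr \<beta> * \<bar>u x - u y\<bar> \<le> 2 * K powr \<beta> * M"
      proof -
        have "ell d powr \<beta> \<le> ell (bdist \<Omega> y) powr \<beta>"
          using le assms(2) by (intro powr_mono2 ell_mono) (auto simp: d_def bdist_def ell_nonneg infdist_nonneg)
        then have "ell d powr \<beta> * \<bar>u y\<bar> \<le> ell (bdist \<Omega> y) powr \<beta> * \<bar>u y\<bar>"
          by (rule mult_right_mono) simp
        moreover have "ell d powr \<beta> * \<bar>u x - u y\<bar> \<le> ell d powr \<beta> * \<bar>u x\<bar> + ell d powr \<beta> * \<bar>u y\<bar>"
          by (simp flip: distrib_left add: mult_left_mono abs_triangle_ineq4)
        ultimately show ?thesis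
          using weighted_value_le_of_local_quantity_le[OF assms(2-6) xy(1) LQ]
            weighted_value_le_of_local_quantity_le[OF assms(2-6) xy(2) LQ]
          unfolding K_def d_def by linarith
      qed
      ultimately have "(ell d powr \<alpha> / ell (dist x y) powr \<alpha>) * (ell d powr \<beta> * \<bar>u x - u y\<bar>)
          \<le> K powr \<alpha> * (2 * K powr \<beta> * M)"
        by (rule mult_mono) (use M0 in auto)
      then show ?thesis by (simp add: min powr_add K_def mult_ac)
    qed
  qed
  show ?thesis
  proof (cases "bdist \<Omega> x \<le> bdist \<Omega> y")
    case False
    then show ?thesis using bound_if_le[of y x] assms(7-9)
      by (simp add: min.commute dist_commute abs_minus_commute)
  qed (use bound_if_le assms(7-9) in blast)
qed

lemma Lnorm_w_le_local_quantity:
  fixes \<Omega> :: "'a::euclidean_space set"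
  assumes "0 \<le> \<alpha>" "0 \<le> \<beta>" "0 < r0" "0 < lam" "open \<Omega>" "\<Omega> \<noteq> UNIV"
  shows "Lnorm_w \<alpha> \<beta> \<Omega> u \<le> ereal (admissible_ratio lam r0 powr \<beta> + 2 * admissible_ratio lam r0 powr (\<alpha> + \<beta>))
    * local_quantity \<alpha> \<beta> r0 lam \<Omega> u"
proof (rule ereal_le_mult_if_real_bounds)
  let ?K = "admissible_ratio lam r0"
  show "0 < ?K powr \<beta> + 2 * ?K powr (\<alpha> + \<beta>)"
    using admissible_ratio_ge_1[OF assms(4), of r0] by (simp add: add_pos_pos)
  fix M assume LQ: "local_quantity \<alpha> \<beta> r0 lam \<Omega> u \<le> ereal M"
  have "(SUP x \<in> \<Omega>. ereal (ell (bdist \<Omega> x) powr \<beta> * \<bar>u x\<bar>)) \<le> ereal (?K powr \<beta> * M)"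
    using weighted_value_le_of_local_quantity_le[OF assms(2-6) _ LQ] by (intro SUP_least) auto
  moreover have "Lsemi_w \<alpha> \<beta> \<Omega> u \<le> ereal (2 * ?K powr (\<alpha> + \<beta>) * M)"
    unfolding Lsemi_w_def using weighted_diff_le_of_local_quantity_le[OF assms _ _ _ LQ]
    by (intro SUP_least) auto
  ultimately show "Lnorm_w \<alpha> \<beta> \<Omega> u \<le> ereal ((?K powr \<beta> + 2 * ?K powr (\<alpha> + \<beta>)) * M)"
    unfolding Lnorm_w_def by (metis add_mono distrib_right plus_ereal.simps(1))
qed

lemma ell_radius_le_ell_bdist:
  fixes \<Omega> :: "'a::euclidean_space set"
  assumes "1 < lam" "open \<Omega>" "\<Omega> \<noteq> UNIV" "0 < r" "ball x (lam * r) \<subseteq> \<Omega>" "z \<in> ball x r"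
  shows "ell r \<le> ell_dilation (lam - 1) * ell (bdist \<Omega> z)"
proof -
  have "r \<le> lam * r" using assms(1,4) by simp
  then have "z \<in> ball x (lam * r)" using assms(6) by simp
  then have "lam * r - dist x z \<le> bdist \<Omega> z" by (rule radius_minus_dist_le_bdist[OF assms(2,3,5)])
  moreover have "dist x z < r" using assms(6) by simp
  ultimately have "(lam - 1) * r \<le> bdist \<Omega> z" by (simp add: algebra_simps)
  then show ?thesis using assms(1,4) by (intro ell_le_ell_dilation_mult) auto
qed

lemma ball_value_le_of_Lnorm_w_le:
  fixes \<Omega> :: "'a::euclidean_space set"
  assumes "0 \<le> \<beta>" "1 < lam" "open \<Omega>" "\<Omega> \<noteq> UNIV" "0 < r" "ball x (lam * r) \<subseteq> \<Omega>"
    "z \<in> ball x r" and LN: "Lnorm_w \<alpha> \<beta> \<Omega> u \<le> ereal M"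
  shows "ell r powr \<beta> * \<bar>u z\<bar> \<le> ell_dilation (lam - 1) powr \<beta> * M"
proof -
  define K where "K = ell_dilation (lam - 1)"
  have K: "0 \<le> K" using ell_dilation_ge_1[of "lam - 1"] assms(2) unfolding K_def by linarith
  have "z \<in> \<Omega>" using assms(2,5-7) subset_ball[of r "lam * r" x] by auto
  have "ell r powr \<beta> \<le> K powr \<beta> * ell (bdist \<Omega> z) powr \<beta>"
    using ell_radius_le_ell_bdist[OF assms(2-7)] K assms(1)
    by (intro powr_le_mult_powr) (auto simp: K_def ell_nonneg)
  then have "ell r powr \<beta> * \<bar>u z\<bar> \<le> K powr \<beta> * (ell (bdist \<Omega> z) powr \<beta> * \<bar>u z\<bar>)"
    unfolding mult.assoc[symmetric] by (rule mult_right_mono) simp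
  also have "\<dots> \<le> K powr \<beta> * M"
    using weighted_bounds_of_Lnorm_w_le(1)[OF LN assms(3) \<open>z \<in> \<Omega>\<close>] by (intro mult_left_mono) auto
  finally show ?thesis by (simp add: K_def)
qed

lemma ball_diff_le_of_Lnorm_w_le:
  fixes \<Omega> :: "'a::euclidean_space set"
  assumes "0 \<le> \<alpha>" "0 \<le> \<beta>" "1 < lam" "open \<Omega>" "\<Omega> \<noteq> UNIV" "0 < r" "ball x (lam * r) \<subseteq> \<Omega>"
    "y \<in> ball x r" "z \<in> ball x r" "y \<noteq> z" and LN: "Lnorm_w \<alpha> \<beta> \<Omega> u \<le> ereal M"
  shows "ell r powr (\<alpha> + \<beta>) * \<bar>u y - u z\<bar> / ell (dist y z) powr \<alpha>
    \<le> ell_dilation (lam - 1) powr (\<alpha> + \<beta>) * M"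
proof -
  define K where "K = ell_dilation (lam - 1)"
  define m where "m = min (bdist \<Omega> y) (bdist \<Omega> z)"
  define q where "q = \<bar>u y - u z\<bar> / ell (dist y z) powr \<alpha>"
  have K: "0 \<le> K" using ell_dilation_ge_1[of "lam - 1"] assms(3) unfolding K_def by linarith
  have yz: "y \<in> \<Omega>" "z \<in> \<Omega>" using assms(3,6-9) subset_ball[of r "lam * r" x] by auto
  have "ell r \<le> K * ell m"
    using ell_radius_le_ell_bdist[OF assms(3-7,8)] ell_radius_le_ell_bdist[OF assms(3-7,9)]
    by (simp add: K_def m_def min_def)
  then have "ell r powr (\<alpha> + \<beta>) \<le> K powr (\<alpha> + \<beta>) * ell m powr (\<alpha> + \<beta>)"
    using K assms(1,2) by (intro powr_le_mult_powr) (auto simp: ell_nonneg)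
  then have "ell r powr (\<alpha> + \<beta>) * q \<le> K powr (\<alpha> + \<beta>) * (ell m powr (\<alpha> + \<beta>) * q)"
    unfolding mult.assoc[symmetric] by (rule mult_right_mono) (simp add: q_def)
  also have "\<dots> \<le> K powr (\<alpha> + \<beta>) * M"
    using weighted_bounds_of_Lnorm_w_le(2)[OF LN assms(4) yz assms(10)]
    by (intro mult_left_mono) (auto simp: m_def q_def)
  finally show ?thesis by (simp add: K_def q_def)
qed

lemma local_quantity_le_Lnorm_w:
  fixes \<Omega> :: "'a::euclidean_space set"
  assumes "0 \<le> \<alpha>" "0 \<le> \<beta>" "1 < lam" "open \<Omega>" "\<Omega> \<noteq> UNIV"
  shows "local_quantity \<alpha> \<beta> r0 lam \<Omega> u
    \<le> ereal (ell_dilation (lam - 1) powr \<beta> + ell_dilation (lam - 1) powr (\<alpha> + \<beta>)) * Lnorm_w \<alpha> \<beta> \<Omega> u"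
proof (rule ereal_le_mult_if_real_bounds)
  let ?K = "ell_dilation (lam - 1)"
  show "0 < ?K powr \<beta> + ?K powr (\<alpha> + \<beta>)"
    using ell_dilation_ge_1[of "lam - 1"] assms(3) by (simp add: add_pos_pos)
  fix M assume LN: "Lnorm_w \<alpha> \<beta> \<Omega> u \<le> ereal M"
  show "local_quantity \<alpha> \<beta> r0 lam \<Omega> u \<le> ereal ((?K powr \<beta> + ?K powr (\<alpha> + \<beta>)) * M)"
    unfolding local_quantity_def
  proof (rule SUP_least, clarsimp)
    fix x r assume r: "0 < r" "r < r0" "ball x (lam * r) \<subseteq> \<Omega>"
    have "ereal (ell r powr \<beta>) * supnorm (ball x r) u \<le> ereal (?K powr \<beta> * M)"
      unfolding supnorm_def using ell_pos[OF r(1)]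
        ball_value_le_of_Lnorm_w_le[OF assms(2-5) r(1,3) _ LN]
      by (intro ereal_mult_SUP_le) auto
    moreover have "ereal (ell r powr (\<alpha> + \<beta>)) * Lsemi \<alpha> (ball x r) u \<le> ereal (?K powr (\<alpha> + \<beta>) * M)"
      unfolding Lsemi_def using ell_pos[OF r(1)]
        ball_diff_le_of_Lnorm_w_le[OF assms r(1,3) _ _ _ LN]
      by (intro ereal_mult_SUP_le) auto
    ultimately show "ereal (ell r powr \<beta>) * supnorm (ball x r) u
        + ereal (ell r powr (\<alpha> + \<beta>)) * Lsemi \<alpha> (ball x r) u
        \<le> ereal ((?K powr \<beta> + ?K powr (\<alpha> + \<beta>)) * M)"
      by (metis add_mono distrib_right plus_ereal.simps(1))
  qed
qed

theorem lemma3p2: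
  fixes R \<alpha> \<beta> r0 lam :: real
  assumes "\<alpha> \<ge> 0" and "\<beta> \<ge> 0" and "r0 > 0" and "lam > 1"
  shows "\<exists>c C. c > 0 \<and> C > 0 \<and>
    (\<forall>(\<Omega> :: 'a::euclidean_space set) (u :: 'a \<Rightarrow> real).
       open \<Omega> \<and> \<Omega> \<noteq> {} \<and> \<Omega> \<noteq> UNIV
       \<and> bdd_above (bdist \<Omega> ` \<Omega>) \<and> (SUP x \<in> \<Omega>. bdist \<Omega> x) = R \<longrightarrow>
         ereal c * Lnorm_w \<alpha> \<beta> \<Omega> u \<le> local_quantity \<alpha> \<beta> r0 lam \<Omega> u
       \<and> local_quantity \<alpha> \<beta> r0 lam \<Omega> u \<le> ereal C * Lnorm_w \<alpha> \<beta> \<Omega> u)"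
proof (intro exI conjI allI impI)
  define K where "K = admissible_ratio lam r0"
  define K' where "K' = ell_dilation (lam - 1)"
  have "1 \<le> K" "1 \<le> K'"
    using admissible_ratio_ge_1 ell_dilation_ge_1 assms(4) by (auto simp: K_def K'_def)
  then show "0 < 1 / (K powr \<beta> + 2 * K powr (\<alpha> + \<beta>))" "0 < K' powr \<beta> + K' powr (\<alpha> + \<beta>)"
    by (simp_all add: add_pos_pos)
  fix \<Omega> :: "'a set" and u :: "'a \<Rightarrow> real"
  assume "open \<Omega> \<and> \<Omega> \<noteq> {} \<and> \<Omega> \<noteq> UNIV \<and> bdd_above (bdist \<Omega> ` \<Omega>) \<and> (SUP x \<in> \<Omega>. bdist \<Omega> x) = R"
  then have \<Omega>: "open \<Omega>" "\<Omega> \<noteq> UNIV" by auto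
  show "ereal (1 / (K powr \<beta> + 2 * K powr (\<alpha> + \<beta>))) * Lnorm_w \<alpha> \<beta> \<Omega> u \<le> local_quantity \<alpha> \<beta> r0 lam \<Omega> u"
    using Lnorm_w_le_local_quantity[OF assms(1-3) _ \<Omega>, of lam u] \<open>1 \<le> K\<close> assms(4)
    by (intro ereal_inverse_mult_le) (auto simp: K_def add_pos_pos)
  show "local_quantity \<alpha> \<beta> r0 lam \<Omega> u \<le> ereal (K' powr \<beta> + K' powr (\<alpha> + \<beta>)) * Lnorm_w \<alpha> \<beta> \<Omega> u"
    using local_quantity_le_Lnorm_w[OF assms(1,2,4) \<Omega>] by (simp add: K'_def)
qed

end
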